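(* Let $m\in\mathbb{N}$, let $\|\cdot\|$ be an arbitrary norm on $\mathbb{R}^m$, and let $\varepsilon>0$. Set $n(m):=\lceil \log_2(m+1)\rceil+1$. Then there exists an algorithm $R_m^\varepsilon\colon\mathbb{R}^m\to\mathbb{R}^m$ that uses at most $n(m)$ adaptively chosen measurements, each of which is a Lipschitz-continuous functional $\mathbb{R}^m\to\mathbb{R}$ (with Lipschitz constant $1$ with respect to $\|\cdot\|$), such that \[ \|x-R_m^\varepsilon(x)\|\le\varepsilon\qquad\text{for all }x\in\mathbb{R}^m. \]
   Context: An algorithm using at most $n$ adaptive measurements on $\mathbb{R}^m$ is a map of the form $x\mapsto \Phi(y_1,\dots,y_n)$, where $y_1=\lambda_1(x)$ for a fixed functional $\lambda_1\colon\mathbb{R}^m\to\mathbb{R}$, and for $k\ge 2$, $y_k=\lambda_k^{(y_1,\dots,y_{k-1})}(x)$, where the functional $\lambda_k^{(y_1,\dots,y_{k-1})}\colon\mathbb{R}^m\to\mathbb{R}$ may depend in an arbitrary way on the previously computed values $y_1,\dots,y_{k-1}$; the reconstruction map $\Phi\colon\mathbb{R}^n\to\mathbb{R}^m$ is arbitrary (not necessarily continuous). Here every functional that may ever be used is required to be Lipschitz continuous. *)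

theory Defs
  imports "HOL-Analysis.Analysis"
begin

text \<open>R^m is represented as the functions nat => real vanishing outside {..<m}.\<close>
definition vecs :: "nat \<Rightarrow> (nat \<Rightarrow> real) set" where
  "vecs m = {x. \<forall>i\<ge>m. x i = 0}"

definition is_norm_on :: "nat \<Rightarrow> ((nat \<Rightarrow> real) \<Rightarrow> real) \<Rightarrow> bool" where
  "is_norm_on m N \<longleftrightarrow>
     (\<forall>x\<in>vecs m. 0 \<le> N x) \<and>
     (\<forall>x\<in>vecs m. N x = 0 \<longleftrightarrow> x = (\<lambda>i. 0)) \<and>
     (\<forall>c. \<forall>x\<in>vecs m. N (\<lambda>i. c * x i) = \<bar>c\<bar> * N x) \<and>
     (\<forall>x\<in>vecs m. \<forall>y\<in>vecs m. N (\<lambda>i. x i + y i) \<le> N x + N y)"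

text \<open>Adaptive measurements: the k-th functional is L applied to the list of previously
  computed values; adaptive_meas L k x is the list [y_1,...,y_k].\<close>
fun adaptive_meas :: "(real list \<Rightarrow> (nat \<Rightarrow> real) \<Rightarrow> real) \<Rightarrow> nat \<Rightarrow> (nat \<Rightarrow> real) \<Rightarrow> real list" where
  "adaptive_meas L 0 x = []"
| "adaptive_meas L (Suc k) x = (let ys = adaptive_meas L k x in ys @ [L ys x])"

end

theory Submission
  imports Defs
begin

text \<open>Fix a scale \<open>s\<close> and \<open>M = 2^q > m\<close>. A point \<open>x\<close> is good for a shift \<open>c < M\<close> if every
  coordinate of \<open>x/s - c/M\<close> keeps distance at least \<open>1/(2M)\<close> from \<open>\<int>\<close>; since each coordinate
  excludes at most one shift, every point is good for some shift. Good points for the same shift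
  lying in different cells of the grid \<open>s(\<int>^m + c/M)\<close> are at norm distance at least
  \<open>s/(MC)\<close>, where \<open>|z_i| \<le> C \<parallel>z\<parallel>\<close> by equivalence of norms. All measurements are infimal convolutions
  \<open>x \<mapsto> inf\<^sub>p (a p + \<parallel>x - p\<parallel>)\<close>, hence \<open>1\<close>-Lipschitz. The first \<open>q\<close> are distances to unions of good
  sets and determine a suitable shift bit by bit; the last one uses an injective labelling of the
  cells by numbers in \<open>(0, s/(MC)]\<close> and returns exactly the label of the cell of \<open>x\<close>. The
  reconstruction is the centre of that cell, at distance at most \<open>(s/2) \<Sum>\<^sub>i \<parallel>e\<^sub>i\<parallel>\<close> from \<open>x\<close>.\<close>

definition int_dist :: "real \<Rightarrow> real" where
  "int_dist t = infdist t \<int>"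

lemma int_dist_le: "int_dist t \<le> \<bar>t - of_int n\<bar>"
  unfolding int_dist_def using infdist_le[of "of_int n" \<int> t] by (simp add: dist_real_def)

lemma int_dist_lessE:
  assumes "int_dist t < e"
  obtains n :: int where "\<bar>t - of_int n\<bar> < e"
proof (rule ccontr)
  assume "\<not> thesis"
  with that have "\<forall>a\<in>\<int>. e \<le> dist t a" by (force simp: dist_real_def not_less elim!: Ints_cases)
  then have "e \<le> int_dist t" unfolding int_dist_def infdist_def by (auto intro!: cINF_greatest)
  with assms show False by simp
qed

lemma int_dist_Lipschitz: "\<bar>int_dist a - int_dist b\<bar> \<le> \<bar>a - b\<bar>"
  unfolding int_dist_def using infdist_triangle_abs[of a \<int> b] by (simp add: dist_real_def)

lemma floor_neq_imp_dist_ge: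
  fixes t t' :: real
  assumes "w \<le> int_dist t" "w \<le> int_dist t'" "\<lfloor>t\<rfloor> \<noteq> \<lfloor>t'\<rfloor>"
  shows "2 * w \<le> \<bar>t - t'\<bar>"
proof -
  have "w \<le> t - \<lfloor>t\<rfloor>" "w \<le> \<lfloor>t\<rfloor> + 1 - t" "w \<le> t' - \<lfloor>t'\<rfloor>" "w \<le> \<lfloor>t'\<rfloor> + 1 - t'"
    using assms(1,2) int_dist_le[of t "\<lfloor>t\<rfloor>"] int_dist_le[of t "\<lfloor>t\<rfloor> + 1"]
      int_dist_le[of t' "\<lfloor>t'\<rfloor>"] int_dist_le[of t' "\<lfloor>t'\<rfloor> + 1"] by linarith+
  moreover have "real_of_int \<lfloor>t\<rfloor> + 1 \<le> \<lfloor>t'\<rfloor> \<or> real_of_int \<lfloor>t'\<rfloor> + 1 \<le> \<lfloor>t\<rfloor>"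
    using assms(3) by linarith
  ultimately show ?thesis by linarith
qed

lemma int_dist_shift_unique:
  fixes M c c' :: nat
  assumes "c < M" "c' < M"
    and "int_dist (t - real c / M) < 1 / (2 * M)" "int_dist (t - real c' / M) < 1 / (2 * M)"
  shows "c = c'"
proof -
  have M: "M > 0" using assms(1) by simp
  obtain n :: int where n: "\<bar>t - real c / M - n\<bar> < 1 / (2 * M)" using assms(3) by (rule int_dist_lessE)
  obtain n' :: int where n': "\<bar>t - real c' / M - n'\<bar> < 1 / (2 * M)" using assms(4) by (rule int_dist_lessE)
  have "\<bar>(t - real c / M - n) - (t - real c' / M - n')\<bar> < 1 / M"
    using n n' by (simp add: abs_diff_less_iff)
  also have "(t - real c / M - n) - (t - real c' / M - n') = of_int (int c' - int c + (n' - n) * M) / M"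
    using M by (simp add: field_simps)
  finally have "\<bar>of_int (int c' - int c + (n' - n) * M) :: real\<bar> < 1"
    using M by (simp add: divide_less_cancel)
  then have "\<bar>int c' - int c + (n' - n) * M\<bar> < 1"
    by (simp only: of_int_abs[symmetric] of_int_less_1_iff)
  then have "int c' - int c = (n - n') * M"
    by (simp add: algebra_simps)
  then have "int M dvd int c' - int c" by simp
  with assms(1,2) show ?thesis
    using dvd_imp_le_int[of "int c' - int c" "int M"] by (cases "c = c'") auto
qed

lemma exists_shift_avoiding_Ints:
  fixes M :: nat and t :: "nat \<Rightarrow> real"
  assumes "m < M"
  shows "\<exists>c<M. \<forall>i<m. 1 / (2 * M) \<le> int_dist (t i - real c / M)"
proof -
  define bad where "bad i = {c. c < M \<and> int_dist (t i - real c / M) < 1 / (2 * M)}" for i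
  have "card (bad i) \<le> 1" for i
    using int_dist_shift_unique[of _ M] by (auto simp: bad_def card_le_Suc0_iff_eq)
  then have "card (\<Union>i<m. bad i) \<le> m"
    using card_UN_le[of "{..<m}" bad] sum_mono[of "{..<m}" "\<lambda>i. card (bad i)" "\<lambda>_. 1"] by simp
  then have "\<not> {..<M} \<subseteq> (\<Union>i<m. bad i)"
    using card_mono[of "\<Union>i<m. bad i" "{..<M}"] assms by (auto simp: bad_def)
  then show ?thesis by (auto simp: bad_def not_less)
qed

lemma le_two_pow_ceiling_log:
  fixes x :: real
  assumes "1 \<le> x"
  shows "x \<le> 2 ^ nat \<lceil>log 2 x\<rceil>"
proof -
  have "x = 2 powr log 2 x" using assms by simp
  also have "\<dots> \<le> 2 powr real (nat \<lceil>log 2 x\<rceil>)"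
    using assms by (intro powr_mono) (auto simp: le_nat_iff)
  also have "\<dots> = 2 ^ nat \<lceil>log 2 x\<rceil>" by (rule powr_realpow) simp
  finally show ?thesis .
qed

lemma nat_eq_if_low_bits_eq:
  fixes a b :: nat
  assumes "a < 2 ^ q" "b < 2 ^ q" "\<And>j. j < q \<Longrightarrow> bit a j \<longleftrightarrow> bit b j"
  shows "a = b"
  using assms by (metis bit_eq_iff bit_take_bit_iff take_bit_nat_eq_self_iff)

lemma adaptive_meas_length: "length (adaptive_meas L k x) = k"
  by (induction k) (auto simp: Let_def)

lemma vecs_diff: "x \<in> vecs m \<Longrightarrow> y \<in> vecs m \<Longrightarrow> (\<lambda>i. x i - y i) \<in> vecs m"
  and vecs_scale: "x \<in> vecs m \<Longrightarrow> (\<lambda>i. c * x i) \<in> vecs m"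
  by (simp_all add: vecs_def)

definition unit_vec :: "nat \<Rightarrow> nat \<Rightarrow> real" where
  "unit_vec i = (\<lambda>j. if j = i then 1 else 0)"

lemma unit_vec_in_vecs: "i < m \<Longrightarrow> unit_vec i \<in> vecs m"
  by (simp add: vecs_def unit_vec_def)

lemma finite_ex_uniform_pos:
  assumes "finite A" "\<forall>c\<in>A. \<exists>e>0. \<forall>p\<in>Q c. (e::real) \<le> f p"
  shows "\<exists>e>0. \<forall>c\<in>A. \<forall>p\<in>Q c. e \<le> f p"
  using assms
proof (induction A rule: finite_induct)
  case empty then show ?case by (intro exI[of _ 1]) auto
next
  case (insert a A)
  then obtain e1 where e1: "e1 > 0" "\<forall>c\<in>A. \<forall>p\<in>Q c. e1 \<le> f p" by auto
  obtain e2 where e2: "e2 > 0" "\<forall>p\<in>Q a. e2 \<le> f p" using insert.prems by auto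
  show ?case using e1 e2 by (intro exI[of _ "min e1 e2"]) (force simp: min_le_iff_disj)
qed

lemma compact_l1_sphere: "compact {z \<in> vecs m. (\<Sum>i<m. \<bar>z i\<bar>) = 1}"
proof -
  define S where "S = PiE UNIV (\<lambda>i. if i < m then {-1..1} else {0::real})"
  have "compactin (product_topology (\<lambda>i. euclidean) UNIV) S"
    unfolding S_def by (subst compactin_PiE) auto
  then have "compact S" by (simp add: euclidean_product_topology)
  moreover have "closed {z::nat\<Rightarrow>real. (\<Sum>i<m. \<bar>z i\<bar>) = 1}"
    by (intro closed_Collect_eq continuous_intros continuous_on_product_coordinates)
  ultimately have "compact (S \<inter> {z. (\<Sum>i<m. \<bar>z i\<bar>) = 1})"
    by (rule compact_Int_closed)
  moreover have "S \<inter> {z. (\<Sum>i<m. \<bar>z i\<bar>) = 1} = {z \<in> vecs m. (\<Sum>i<m. \<bar>z i\<bar>) = 1}"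
  proof (intro equalityI subsetI)
    fix z assume z: "z \<in> S \<inter> {z. (\<Sum>i<m. \<bar>z i\<bar>) = 1}"
    then have "z i = 0" if "m \<le> i" for i
      using that by (auto simp: S_def PiE_UNIV_domain Pi_iff dest!: spec[of _ i])
    with z show "z \<in> {z \<in> vecs m. (\<Sum>i<m. \<bar>z i\<bar>) = 1}" by (auto simp: vecs_def)
  next
    fix z assume z: "z \<in> {z \<in> vecs m. (\<Sum>i<m. \<bar>z i\<bar>) = 1}"
    then have "\<bar>z i\<bar> \<le> 1" if "i < m" for i
      using member_le_sum[of i "{..<m}" "\<lambda>i. \<bar>z i\<bar>"] that by auto
    with z show "z \<in> S \<inter> {z. (\<Sum>i<m. \<bar>z i\<bar>) = 1}"
      by (auto simp: S_def PiE_UNIV_domain vecs_def abs_le_iff not_less)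
  qed
  ultimately show ?thesis by simp
qed

locale vecs_norm =
  fixes m :: nat and N :: "(nat \<Rightarrow> real) \<Rightarrow> real"
  assumes is_norm: "is_norm_on m N"
begin

lemma N_nonneg: "x \<in> vecs m \<Longrightarrow> 0 \<le> N x"
  and N_eq_0_iff: "x \<in> vecs m \<Longrightarrow> N x = 0 \<longleftrightarrow> x = (\<lambda>i. 0)"
  and N_homogeneous: "x \<in> vecs m \<Longrightarrow> N (\<lambda>i. c * x i) = \<bar>c\<bar> * N x"
  and N_triangle: "x \<in> vecs m \<Longrightarrow> y \<in> vecs m \<Longrightarrow> N (\<lambda>i. x i + y i) \<le> N x + N y"
  using is_norm unfolding is_norm_on_def by blast+

lemma N_zero: "N (\<lambda>i. 0) = 0"
  using N_eq_0_iff[of "\<lambda>i. 0"] by (simp add: vecs_def)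

lemma N_diff_commute:
  assumes "x \<in> vecs m" "y \<in> vecs m"
  shows "N (\<lambda>i. x i - y i) = N (\<lambda>i. y i - x i)"
  using N_homogeneous[OF vecs_diff[OF assms(2,1)], of "-1"] by simp

lemma N_diff_triangle:
  assumes "x \<in> vecs m" "y \<in> vecs m" "p \<in> vecs m"
  shows "N (\<lambda>i. x i - p i) \<le> N (\<lambda>i. x i - y i) + N (\<lambda>i. y i - p i)"
  using N_triangle[OF vecs_diff[OF assms(1,2)] vecs_diff[OF assms(2,3)]] by simp

lemma N_le_sum_coords:
  assumes "z \<in> vecs m"
  shows "N z \<le> (\<Sum>i<m. \<bar>z i\<bar> * N (unit_vec i))"
proof -
  have "N (\<lambda>j. if j < k then z j else 0) \<le> (\<Sum>i<k. \<bar>z i\<bar> * N (unit_vec i))" if "k \<le> m" for k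
    using that
  proof (induction k)
    case 0 then show ?case using N_zero by simp
  next
    case (Suc k)
    have e: "unit_vec k \<in> vecs m" using Suc.prems by (simp add: unit_vec_in_vecs)
    have t: "(\<lambda>j. if j < k then z j else 0) \<in> vecs m" using Suc.prems by (simp add: vecs_def)
    have "(\<lambda>j. if j < Suc k then z j else 0) = (\<lambda>j. (if j < k then z j else 0) + z k * unit_vec k j)"
      by (auto simp: unit_vec_def less_Suc_eq)
    then have "N (\<lambda>j. if j < Suc k then z j else 0)
        \<le> N (\<lambda>j. if j < k then z j else 0) + N (\<lambda>j. z k * unit_vec k j)"
      using N_triangle[OF t vecs_scale[OF e]] by simp
    also have "N (\<lambda>j. z k * unit_vec k j) = \<bar>z k\<bar> * N (unit_vec k)" by (rule N_homogeneous[OF e])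
    finally show ?case using Suc by simp
  qed
  moreover have "(\<lambda>j. if j < m then z j else 0) = z" using assms by (auto simp: vecs_def)
  ultimately show ?thesis by force
qed

lemma N_le_uniform_bound:
  assumes "z \<in> vecs m" "\<And>i. i < m \<Longrightarrow> \<bar>z i\<bar> \<le> r"
  shows "N z \<le> r * (\<Sum>i<m. N (unit_vec i))"
proof -
  have "N z \<le> (\<Sum>i<m. \<bar>z i\<bar> * N (unit_vec i))" by (rule N_le_sum_coords[OF assms(1)])
  also have "\<dots> \<le> (\<Sum>i<m. r * N (unit_vec i))"
    using assms(2) N_nonneg[OF unit_vec_in_vecs] by (intro sum_mono mult_right_mono) auto
  finally show ?thesis by (simp add: sum_distrib_left)
qed

lemma continuous_on_N: "continuous_on (vecs m) N"
  unfolding continuous_on_def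
proof
  fix x assume x: "x \<in> vecs m"
  define g where "g z = (\<Sum>i<m. \<bar>z i - x i\<bar> * N (unit_vec i))" for z :: "nat \<Rightarrow> real"
  have "continuous_on UNIV g"
    unfolding g_def by (intro continuous_on_sum continuous_on_mult_right continuous_on_rabs
        continuous_on_diff continuous_on_product_coordinates continuous_on_const)
  then have "(g \<longlongrightarrow> g x) (at x within vecs m)"
    by (meson UNIV_I continuous_on_def tendsto_within_subset subset_UNIV)
  moreover have "g x = 0" by (simp add: g_def)
  ultimately have g0: "(g \<longlongrightarrow> 0) (at x within vecs m)" by simp
  have "norm (N z - N x) \<le> g z" if z: "z \<in> vecs m" for z
  proof -
    have "N z \<le> N x + N (\<lambda>i. z i - x i)"
      using N_triangle[OF x vecs_diff[OF z x]] by simp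
    moreover have "N x \<le> N z + N (\<lambda>i. x i - z i)"
      using N_triangle[OF z vecs_diff[OF x z]] by simp
    moreover have "N (\<lambda>i. z i - x i) \<le> g z"
      using N_le_sum_coords[OF vecs_diff[OF z x]] by (simp add: g_def)
    ultimately show ?thesis using N_diff_commute[OF x z] by simp
  qed
  then have "eventually (\<lambda>z. norm (N z - N x) \<le> g z) (at x within vecs m)"
    by (auto simp: eventually_at_filter)
  then show "(N \<longlongrightarrow> N x) (at x within vecs m)"
    by (rule LIM_zero_cancel[OF Lim_null_comparison[OF _ g0]])
qed

lemma N_ge_l1_norm: "\<exists>c>0. \<forall>z\<in>vecs m. c * (\<Sum>i<m. \<bar>z i\<bar>) \<le> N z"
proof -
  define K where "K = {z \<in> vecs m. (\<Sum>i<m. \<bar>z i\<bar>) = 1}"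
  obtain c where c: "c > 0" "\<forall>k\<in>K. c \<le> N k"
  proof (cases "K = {}")
    case False
    obtain k0 where "k0 \<in> K" "\<forall>k\<in>K. N k0 \<le> N k"
      using continuous_attains_inf[OF _ False, of N] compact_l1_sphere
        continuous_on_subset[OF continuous_on_N] by (auto simp: K_def)
    moreover have "k0 \<in> vecs m" "k0 \<noteq> (\<lambda>i. 0)" using \<open>k0 \<in> K\<close> by (auto simp: K_def)
    then have "0 < N k0" using N_eq_0_iff N_nonneg by (simp add: less_le)
    ultimately show thesis using that by blast
  qed (use that[of 1] in auto)
  have "c * (\<Sum>i<m. \<bar>z i\<bar>) \<le> N z" if z: "z \<in> vecs m" for z
  proof (cases "(\<Sum>i<m. \<bar>z i\<bar>) = 0")
    case True then show ?thesis using N_nonneg[OF z] by simp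
  next
    case False
    define T where "T = (\<Sum>i<m. \<bar>z i\<bar>)"
    have T: "T > 0" using False unfolding T_def by (simp add: less_le sum_nonneg)
    have "(\<Sum>i<m. \<bar>z i\<bar> / T) = 1"
      using T by (simp add: sum_divide_distrib[symmetric] T_def[symmetric])
    then have "(\<lambda>i. (1 / T) * z i) \<in> K"
      using T vecs_scale[OF z, of "1 / T"] by (simp add: K_def abs_mult)
    then have "c \<le> (1 / T) * N z" using c(2) N_homogeneous[OF z, of "1 / T"] T by fastforce
    then show ?thesis using T by (simp add: T_def[symmetric] field_simps)
  qed
  with c(1) show ?thesis by blast
qed

lemma coord_le_N: "\<exists>C>0. \<forall>z\<in>vecs m. \<forall>i<m. \<bar>z i\<bar> \<le> C * N z"
proof -
  obtain c where c: "c > 0" "\<forall>z\<in>vecs m. c * (\<Sum>i<m. \<bar>z i\<bar>) \<le> N z"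
    using N_ge_l1_norm by blast
  have "\<bar>z i\<bar> \<le> 1 / c * N z" if "z \<in> vecs m" "i < m" for z i
  proof -
    have "c * \<bar>z i\<bar> \<le> c * (\<Sum>i<m. \<bar>z i\<bar>)"
      using c(1) that(2) by (intro mult_left_mono member_le_sum) auto
    also have "\<dots> \<le> N z" using c(2) that(1) by blast
    finally show ?thesis using c(1) by (simp add: field_simps)
  qed
  with c(1) show ?thesis by (intro exI[of _ "1 / c"]) auto
qed

text \<open>The value \<open>1\<close> on the empty set keeps a distance query to an empty set nonzero.\<close>
definition inf_conv :: "((nat \<Rightarrow> real) \<Rightarrow> real) \<Rightarrow> (nat \<Rightarrow> real) set \<Rightarrow> (nat \<Rightarrow> real) \<Rightarrow> real" where
  "inf_conv a P x = (if P = {} then 1 else INF p\<in>P. a p + N (\<lambda>i. x i - p i))"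

lemma inf_conv_le:
  assumes "P \<subseteq> vecs m" "\<forall>p\<in>P. 0 \<le> a p" "x \<in> vecs m" "p \<in> P"
  shows "inf_conv a P x \<le> a p + N (\<lambda>i. x i - p i)"
proof -
  have "0 \<le> a p + N (\<lambda>i. x i - p i)" if "p \<in> P" for p
    using that assms(1,2) N_nonneg[OF vecs_diff[OF assms(3)]] by (simp add: subset_iff)
  then have "bdd_below ((\<lambda>p. a p + N (\<lambda>i. x i - p i)) ` P)"
    by (intro bdd_belowI2)
  with assms(4) show ?thesis by (auto simp: inf_conv_def intro: cINF_lower)
qed

lemma inf_conv_ge:
  assumes "P \<noteq> {}" "\<And>p. p \<in> P \<Longrightarrow> e \<le> a p + N (\<lambda>i. x i - p i)"
  shows "e \<le> inf_conv a P x"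
  using assms by (simp add: inf_conv_def cINF_greatest)

lemma inf_conv_Lipschitz:
  assumes "P \<subseteq> vecs m" "\<forall>p\<in>P. 0 \<le> a p" "x \<in> vecs m" "y \<in> vecs m"
  shows "\<bar>inf_conv a P x - inf_conv a P y\<bar> \<le> N (\<lambda>i. x i - y i)"
proof -
  have "inf_conv a P x \<le> inf_conv a P y + N (\<lambda>i. x i - y i)"
    if x: "x \<in> vecs m" and y: "y \<in> vecs m" for x y
  proof (cases "P = {}")
    case True then show ?thesis using N_nonneg[OF vecs_diff[OF x y]] by (simp add: inf_conv_def)
  next
    case False
    have "inf_conv a P x - N (\<lambda>i. x i - y i) \<le> inf_conv a P y"
    proof (rule inf_conv_ge[OF False])
      fix p assume p: "p \<in> P"
      have "inf_conv a P x \<le> a p + N (\<lambda>i. x i - p i)" by (rule inf_conv_le[OF assms(1,2) x p])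
      also have "\<dots> \<le> a p + N (\<lambda>i. x i - y i) + N (\<lambda>i. y i - p i)"
        using N_diff_triangle[OF x y, of p] p assms(1) by (simp add: subset_iff)
      finally show "inf_conv a P x - N (\<lambda>i. x i - y i) \<le> a p + N (\<lambda>i. y i - p i)" by simp
    qed
    then show ?thesis by simp
  qed
  from this[OF assms(3,4)] this[OF assms(4,3)] show ?thesis
    using N_diff_commute[OF assms(3,4)] by simp
qed

lemma inf_conv_self:
  assumes "P \<subseteq> vecs m" "\<forall>p\<in>P. 0 \<le> a p" "x \<in> P"
    and "\<And>p. p \<in> P \<Longrightarrow> a x \<le> a p + N (\<lambda>i. x i - p i)"
  shows "inf_conv a P x = a x"
proof (rule antisym)
  have "x \<in> vecs m" using assms(1,3) by blast
  from inf_conv_le[OF assms(1,2) this assms(3)] show "inf_conv a P x \<le> a x"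
    using N_zero by simp
  show "a x \<le> inf_conv a P x"
    using assms(3,4) by (intro inf_conv_ge) auto
qed

end

locale grid_scheme = vecs_norm +
  fixes s C :: real and q M :: nat
  assumes s_pos: "0 < s" and C_pos: "0 < C"
    and coord_bound: "\<And>z i. z \<in> vecs m \<Longrightarrow> i < m \<Longrightarrow> \<bar>z i\<bar> \<le> C * N z"
    and M_eq: "M = 2 ^ q" and m_less_M: "m < M"
begin

definition shifted :: "nat \<Rightarrow> (nat \<Rightarrow> real) \<Rightarrow> nat \<Rightarrow> real" where
  "shifted c x i = x i / s - real c / M"

definition good_set :: "nat \<Rightarrow> (nat \<Rightarrow> real) set" where
  "good_set c = {x \<in> vecs m. \<forall>i<m. 1 / (2 * M) \<le> int_dist (shifted c x i)}"

definition cell :: "nat \<Rightarrow> (nat \<Rightarrow> real) \<Rightarrow> int list" where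
  "cell c x = map (\<lambda>i. \<lfloor>shifted c x i\<rfloor>) [0..<m]"

definition cell_center :: "nat \<Rightarrow> int list \<Rightarrow> nat \<Rightarrow> real" where
  "cell_center c k i = (if i < m then s * (of_int (k ! i) + real c / M + 1 / 2) else 0)"

definition separation :: real where
  "separation = s / (M * C)"

definition cell_tag :: "int list \<Rightarrow> real" where
  "cell_tag k = separation / (1 + real (to_nat k))"

lemma M_pos: "0 < M"
  using m_less_M by simp

lemma separation_pos: "0 < separation"
  using s_pos C_pos M_pos by (simp add: separation_def)

lemma cell_tag_pos: "0 < cell_tag k"
  and cell_tag_le: "cell_tag k \<le> separation"
  using separation_pos by (simp_all add: cell_tag_def field_simps)

lemma inj_cell_tag: "inj cell_tag"
  using separation_pos by (auto simp: inj_on_def cell_tag_def field_simps)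

lemma good_set_subset: "good_set c \<subseteq> vecs m"
  by (auto simp: good_set_def)

lemma shifted_diff: "shifted c x i - shifted c p i = (x i - p i) / s"
  by (simp add: shifted_def diff_divide_distrib)

lemma good_set_cover: "x \<in> vecs m \<Longrightarrow> \<exists>c<M. x \<in> good_set c"
  using exists_shift_avoiding_Ints[OF m_less_M, of "\<lambda>i. x i / s"]
  by (auto simp: good_set_def shifted_def)

lemma good_set_cells_separated:
  assumes "x \<in> good_set c" "p \<in> good_set c" "cell c x \<noteq> cell c p"
  shows "separation \<le> N (\<lambda>i. x i - p i)"
proof -
  obtain i where i: "i < m" "\<lfloor>shifted c x i\<rfloor> \<noteq> \<lfloor>shifted c p i\<rfloor>"
    using assms(3) by (auto simp: cell_def)
  have "2 * (1 / (2 * M)) \<le> \<bar>shifted c x i - shifted c p i\<bar>"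
    using assms(1,2) i by (intro floor_neq_imp_dist_ge) (auto simp: good_set_def)
  then have "s / M \<le> \<bar>x i - p i\<bar>"
    using s_pos M_pos by (simp add: shifted_diff field_simps)
  also have "\<dots> \<le> C * N (\<lambda>i. x i - p i)"
    using assms(1,2) i(1) good_set_subset by (intro coord_bound vecs_diff) auto
  finally show ?thesis using C_pos M_pos by (simp add: separation_def field_simps)
qed

lemma good_set_dist_pos:
  assumes "x \<notin> good_set c" "x \<in> vecs m"
  shows "\<exists>e>0. \<forall>p\<in>good_set c. e \<le> N (\<lambda>i. x i - p i)"
proof -
  obtain i where i: "i < m" "int_dist (shifted c x i) < 1 / (2 * M)"
    using assms by (auto simp: good_set_def not_le)
  define e where "e = s * (1 / (2 * M) - int_dist (shifted c x i)) / C"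
  have "e \<le> N (\<lambda>i. x i - p i)" if p: "p \<in> good_set c" for p
  proof -
    have "\<bar>shifted c p i - shifted c x i\<bar> = \<bar>x i - p i\<bar> / s"
      using s_pos by (simp add: shifted_diff abs_minus_commute)
    moreover have "1 / (2 * M) \<le> int_dist (shifted c p i)"
      using p i(1) by (simp add: good_set_def)
    ultimately have "1 / (2 * M) \<le> int_dist (shifted c x i) + \<bar>x i - p i\<bar> / s"
      using int_dist_Lipschitz[of "shifted c p i" "shifted c x i"] by linarith
    then have "s * (1 / (2 * M) - int_dist (shifted c x i)) \<le> \<bar>x i - p i\<bar>"
      using s_pos by (simp add: field_simps)
    also have "\<dots> \<le> C * N (\<lambda>i. x i - p i)"
      using assms(2) p i(1) good_set_subset by (intro coord_bound vecs_diff) auto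
    finally show ?thesis using C_pos by (simp add: e_def field_simps)
  qed
  moreover have "e > 0" using s_pos C_pos i(2) by (simp add: e_def)
  ultimately show ?thesis by blast
qed

lemma inf_conv_good_union_eq_0_iff:
  assumes "finite A" "x \<in> vecs m"
  shows "inf_conv (\<lambda>_. 0) (\<Union>c\<in>A. good_set c) x = 0 \<longleftrightarrow> (\<exists>c\<in>A. x \<in> good_set c)"
proof
  assume "\<exists>c\<in>A. x \<in> good_set c"
  then have x: "x \<in> (\<Union>c\<in>A. good_set c)" by blast
  have "inf_conv (\<lambda>_. 0) (\<Union>c\<in>A. good_set c) x = 0"
  proof (rule inf_conv_self[OF _ _ x])
    show "(\<Union>c\<in>A. good_set c) \<subseteq> vecs m" using good_set_subset by blast
    fix p assume "p \<in> (\<Union>c\<in>A. good_set c)"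
    then have "p \<in> vecs m" using good_set_subset by blast
    then show "0 \<le> 0 + N (\<lambda>i. x i - p i)" using N_nonneg vecs_diff assms(2) by simp
  qed simp
  then show "inf_conv (\<lambda>_. 0) (\<Union>c\<in>A. good_set c) x = 0" .
next
  assume zero: "inf_conv (\<lambda>_. 0) (\<Union>c\<in>A. good_set c) x = 0"
  show "\<exists>c\<in>A. x \<in> good_set c"
  proof (rule ccontr)
    assume "\<not> ?thesis"
    then have "\<forall>c\<in>A. \<exists>e>0. \<forall>p\<in>good_set c. e \<le> N (\<lambda>i. x i - p i)"
      using good_set_dist_pos[OF _ assms(2)] by blast
    from finite_ex_uniform_pos[OF assms(1) this] obtain e
      where e: "e > 0" "\<forall>c\<in>A. \<forall>p\<in>good_set c. e \<le> N (\<lambda>i. x i - p i)"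
      by blast
    have "(\<Union>c\<in>A. good_set c) \<noteq> {}" using zero by (metis inf_conv_def one_neq_zero)
    then have "e \<le> inf_conv (\<lambda>_. 0) (\<Union>c\<in>A. good_set c) x"
      by (rule inf_conv_ge) (use e(2) in auto)
    with e(1) zero show False by simp
  qed
qed

text \<open>Tags are positive and at most the separation of distinct cells, so no other cell
  undercuts the tag of the cell of \<open>x\<close>.\<close>
lemma inf_conv_cell_tag:
  assumes "x \<in> good_set c"
  shows "inf_conv (\<lambda>p. cell_tag (cell c p)) (good_set c) x = cell_tag (cell c x)"
proof (rule inf_conv_self[OF good_set_subset _ assms])
  show "\<forall>p\<in>good_set c. 0 \<le> cell_tag (cell c p)" using cell_tag_pos less_imp_le by blast
  fix p assume p: "p \<in> good_set c"
  have "0 \<le> N (\<lambda>i. x i - p i)"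
    using assms p good_set_subset by (intro N_nonneg vecs_diff) auto
  moreover have "separation \<le> N (\<lambda>i. x i - p i)" if "cell c x \<noteq> cell c p"
    using good_set_cells_separated[OF assms p that] .
  ultimately show "cell_tag (cell c x) \<le> cell_tag (cell c p) + N (\<lambda>i. x i - p i)"
    using cell_tag_pos[of "cell c p"] cell_tag_le[of "cell c x"] by fastforce
qed

lemma cell_center_in_vecs: "cell_center c k \<in> vecs m"
  by (simp add: cell_center_def vecs_def)

lemma cell_center_close:
  assumes "x \<in> vecs m"
  shows "N (\<lambda>i. x i - cell_center c (cell c x) i) \<le> s / 2 * (\<Sum>i<m. N (unit_vec i))"
proof (rule N_le_uniform_bound)
  show "(\<lambda>i. x i - cell_center c (cell c x) i) \<in> vecs m"
    using assms cell_center_in_vecs by (rule vecs_diff)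
  fix i assume i: "i < m"
  define t where "t = shifted c x i"
  have "x i - cell_center c (cell c x) i = s * (t - \<lfloor>t\<rfloor> - 1 / 2)"
    using i s_pos by (simp add: cell_center_def cell_def t_def shifted_def field_simps)
  moreover have "\<bar>t - \<lfloor>t\<rfloor> - 1 / 2\<bar> \<le> 1 / 2"
    using of_int_floor_le[of t] real_of_int_floor_add_one_gt[of t] unfolding abs_le_iff by linarith
  ultimately show "\<bar>x i - cell_center c (cell c x) i\<bar> \<le> s / 2"
    using s_pos by (simp add: abs_mult mult_left_mono[of _ "1 / 2" s])
qed

definition consistent_shifts :: "real list \<Rightarrow> nat set" where
  "consistent_shifts ys = {c. c < M \<and> (\<forall>j<length ys. ys ! j = 0 \<longleftrightarrow> \<not> bit c j)}"

definition decoded_shift :: "real list \<Rightarrow> nat" where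
  "decoded_shift ys = (SOME c. c \<in> consistent_shifts ys)"

text \<open>Binary search for a shift \<open>c\<close> with \<open>x \<in> good_set c\<close>: measurement \<open>j < q\<close> answers \<open>0\<close> iff
  such a shift agreeing with the answers so far and having bit \<open>j\<close> clear exists.\<close>
definition measurement :: "real list \<Rightarrow> (nat \<Rightarrow> real) \<Rightarrow> real" where
  "measurement ys = (if length ys < q
     then inf_conv (\<lambda>_. 0) (\<Union>c\<in>{c \<in> consistent_shifts ys. \<not> bit c (length ys)}. good_set c)
     else inf_conv (\<lambda>p. cell_tag (cell (decoded_shift ys) p)) (good_set (decoded_shift ys)))"

definition reconstruction :: "real list \<Rightarrow> nat \<Rightarrow> real" where
  "reconstruction ys = cell_center (decoded_shift (take q ys)) (inv cell_tag (ys ! q))"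

lemma consistent_shifts_snoc:
  "c \<in> consistent_shifts (ys @ [y]) \<longleftrightarrow> c \<in> consistent_shifts ys \<and> (y = 0 \<longleftrightarrow> \<not> bit c (length ys))"
  by (auto simp: consistent_shifts_def nth_append less_Suc_eq)

lemma measurement_Lipschitz:
  assumes "x \<in> vecs m" "y \<in> vecs m"
  shows "\<bar>measurement ys x - measurement ys y\<bar> \<le> N (\<lambda>i. x i - y i)"
proof (cases "length ys < q")
  case True
  have "(\<Union>c\<in>{c \<in> consistent_shifts ys. \<not> bit c (length ys)}. good_set c) \<subseteq> vecs m"
    using good_set_subset by blast
  with True show ?thesis
    unfolding measurement_def by (simp add: inf_conv_Lipschitz[OF _ _ assms])
next
  case False
  have "\<forall>p\<in>good_set (decoded_shift ys). 0 \<le> cell_tag (cell (decoded_shift ys) p)"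
    using cell_tag_pos less_imp_le by blast
  with False show ?thesis
    unfolding measurement_def by (simp add: inf_conv_Lipschitz[OF good_set_subset _ assms])
qed

lemma reconstruction_in_vecs: "reconstruction ys \<in> vecs m"
  by (simp add: reconstruction_def cell_center_in_vecs)

lemma binary_search_invariant:
  assumes "x \<in> vecs m" "j \<le> q"
  shows "\<exists>c\<in>consistent_shifts (adaptive_meas measurement j x). x \<in> good_set c"
  using assms(2)
proof (induction j)
  case 0
  then show ?case using good_set_cover[OF assms(1)] by (simp add: consistent_shifts_def)
next
  case (Suc j)
  define ys where "ys = adaptive_meas measurement j x"
  define A where "A = {c \<in> consistent_shifts ys. \<not> bit c j}"
  obtain c where c: "c \<in> consistent_shifts ys" "x \<in> good_set c"
    using Suc by (auto simp: ys_def)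
  have "length ys = j" by (simp add: ys_def adaptive_meas_length)
  then have y: "measurement ys x = 0 \<longleftrightarrow> (\<exists>c'\<in>A. x \<in> good_set c')"
    using Suc.prems inf_conv_good_union_eq_0_iff[OF _ assms(1), of A]
    by (simp add: measurement_def A_def consistent_shifts_def)
  have "\<exists>c\<in>consistent_shifts (ys @ [measurement ys x]). x \<in> good_set c"
  proof (cases "\<exists>c'\<in>A. x \<in> good_set c'")
    case True
    then show ?thesis
      using y \<open>length ys = j\<close> by (auto simp: consistent_shifts_snoc A_def)
  next
    case False
    then have "bit c j" using c by (auto simp: A_def)
    then show ?thesis
      using False y c \<open>length ys = j\<close> by (auto simp: consistent_shifts_snoc)
  qed
  then show ?case by (simp add: ys_def Let_def)
qed

lemma decoded_shift_eq:
  assumes "c \<in> consistent_shifts ys" "length ys = q"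
  shows "decoded_shift ys = c"
proof -
  have "decoded_shift ys \<in> consistent_shifts ys"
    unfolding decoded_shift_def using assms(1) by (rule someI)
  with assms show ?thesis unfolding consistent_shifts_def
    by (intro nat_eq_if_low_bits_eq[of _ q]) (auto simp: M_eq)
qed

lemma reconstruction_error:
  assumes "x \<in> vecs m"
  shows "N (\<lambda>i. x i - reconstruction (adaptive_meas measurement (Suc q) x) i)
    \<le> s / 2 * (\<Sum>i<m. N (unit_vec i))"
proof -
  define ys where "ys = adaptive_meas measurement q x"
  obtain c where c: "c \<in> consistent_shifts ys" "x \<in> good_set c"
    using binary_search_invariant[OF assms order_refl] by (auto simp: ys_def)
  have len: "length ys = q" by (simp add: ys_def adaptive_meas_length)
  then have shift: "decoded_shift ys = c" using c(1) by (simp add: decoded_shift_eq)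
  then have "measurement ys x = cell_tag (cell c x)"
    using len inf_conv_cell_tag[OF c(2)] by (simp add: measurement_def)
  then have "reconstruction (adaptive_meas measurement (Suc q) x) = cell_center c (cell c x)"
    using len shift inj_cell_tag by (simp add: reconstruction_def ys_def Let_def nth_append)
  then show ?thesis using cell_center_close[OF assms] by simp
qed

end

theorem theorem1:
  fixes m :: nat and N :: "(nat \<Rightarrow> real) \<Rightarrow> real" and \<epsilon> :: real
  assumes "is_norm_on m N" and "\<epsilon> > 0"
  shows "\<exists>k L \<Phi>. k \<le> nat \<lceil>log 2 (real m + 1)\<rceil> + 1 \<and>
     (\<forall>ys. \<forall>x\<in>vecs m. \<forall>y\<in>vecs m. \<bar>L ys x - L ys y\<bar> \<le> N (\<lambda>i. x i - y i)) \<and>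
     (\<forall>ys. \<Phi> ys \<in> vecs m) \<and>
     (\<forall>x\<in>vecs m. N (\<lambda>i. x i - \<Phi> (adaptive_meas L k x) i) \<le> \<epsilon>)"
proof -
  interpret vecs_norm m N by (rule vecs_norm.intro[OF assms(1)])
  obtain C where C: "C > 0" "\<forall>z\<in>vecs m. \<forall>i<m. \<bar>z i\<bar> \<le> C * N z"
    using coord_le_N by blast
  define q where "q = nat \<lceil>log 2 (real m + 1)\<rceil>"
  define B where "B = (\<Sum>i<m. N (unit_vec i))"
  define s where "s = \<epsilon> / (B + 1)"
  have "B \<ge> 0" unfolding B_def using N_nonneg[OF unit_vec_in_vecs] by (auto intro: sum_nonneg)
  then have s: "s > 0" "s / 2 * B \<le> \<epsilon>"
    using assms(2) by (simp_all add: s_def field_simps)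
  have "real (m + 1) \<le> real (2 ^ q)"
    unfolding q_def using le_two_pow_ceiling_log[of "real m + 1"] by simp
  then have "m < 2 ^ q" by linarith
  interpret grid_scheme m N s C q "2 ^ q"
    using C s(1) \<open>m < 2 ^ q\<close> by unfold_locales auto
  have "N (\<lambda>i. x i - reconstruction (adaptive_meas measurement (Suc q) x) i) \<le> \<epsilon>"
    if "x \<in> vecs m" for x
    using reconstruction_error[OF that] s(2) unfolding B_def by linarith
  then show ?thesis
    using measurement_Lipschitz reconstruction_in_vecs
    by (intro exI[of _ "Suc q"] exI[of _ measurement] exI[of _ reconstruction])
      (simp add: q_def[symmetric])
qed

end
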